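(* Let $p(C_1),\dots,p(C_K)>0$ be probabilities summing to $1$ and let $\mathcal E=-\sum_{j=1}^K p(C_j)\log p(C_j)$. Let $\{t_1,\dots,t_n\}$ be partitioned into $K$ nonempty clusters $C_1,\dots,C_K$ with sizes $n_j$, $n_{\min}=\min_j n_j$, $\bar p(C_j)=n_j/n$, and let $g^{\mathrm{True}}\in\{0,1\}^{n\times K}$ with $g^{\mathrm{True}}_{ij}=1$ iff $t_i\in C_j$. Let $g\in\{0,1\}^{n\times K}$ have exactly one entry $1$ in each row, $\hat p(C_j)=\frac1n\sum_i g_{ij}$, $\hat{\mathcal E}=-\sum_j \hat p(C_j)\log\hat p(C_j)$ (with $0\log 0=0$), and $M_{\mathrm{error}}=\sum_{j}\sum_{i}\mathbb I(g_{ij}\ne g^{\mathrm{True}}_{ij})$. Suppose there exists $0<c_2<1$ with $2Kn_{\min}/n\ge c_2$. Then $$|\mathcal E-\hat{\mathcal E}|\le \sum_{j=1}^K\left(\left|\frac{p(C_j)-\bar p(C_j)}{p(C_j)}\right|+\log\!\left(\frac{1}{p(C_j)}\right)\left|p(C_j)-\bar p(C_j)\right|\right)+h\!\left(\frac{2K}{c_2}\right)\left|\frac1n M_{\mathrm{error}}\right|,$$ where $h(x)=x+\log x$.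
   Context: $\mathcal E$ is the true entropy of the cluster distribution, $\bar p$ the empirical cluster proportions, and $\hat{\mathcal E}$ the entropy from an estimated clustering whose cluster labels are aligned with the true ones. *)

theory Defs
  imports Complex_Main
begin

definition negxlogx :: "real \<Rightarrow> real" where
  "negxlogx x = (if x = 0 then 0 else - x * ln x)"

definition entropy :: "nat \<Rightarrow> (nat \<Rightarrow> real) \<Rightarrow> real" where
  "entropy K q = (\<Sum>j<K. negxlogx (q j))"

definition hfun :: "real \<Rightarrow> real" where
  "hfun x = x + ln x"

end

theory Submission
  imports Defs
begin

text \<open>
  With \<open>\<phi>(x) = -x ln x\<close> one has \<open>\<phi>(x) - \<phi>(y) = (y - x) ln x + y ln (y/x)\<close>, and
  \<open>ln t \<le> t - 1\<close> bounds the second term by \<open>|x - y|/x\<close> when \<open>0 < x \<le> 1\<close> and \<open>0 \<le> y \<le> 1\<close>;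
  hence \<open>|\<phi>(x) - \<phi>(y)| \<le> h(1/x) |x - y|\<close>. The entropy difference is split cluster by
  cluster through the empirical proportion \<open>n\<^sub>j/n\<close>. Between the true and the empirical
  proportion this bound, taken at \<open>x = p(C\<^sub>j)\<close>, is exactly the first sum. Between the
  empirical and the estimated proportion it is taken at \<open>x = n\<^sub>j/n \<ge> c\<^sub>2/(2K)\<close>, so by
  monotonicity of \<open>h\<close> its constant is at most \<open>h(2K/c\<^sub>2)\<close>, while \<open>|n\<^sub>j - \<Sum>\<^sub>i g\<^sub>i\<^sub>j|\<close> is at
  most the number of misassigned entries in column \<open>j\<close>.
\<close>

lemma negxlogx_eq: "negxlogx x = - x * ln x"
  by (simp add: negxlogx_def)

lemma hfun_mono:
  assumes "0 < x" "x \<le> y"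
  shows "hfun x \<le> hfun y"
  using assms unfolding hfun_def by (intro add_mono) auto

lemma hfun_nonneg: "1 \<le> x \<Longrightarrow> 0 \<le> hfun x"
  by (simp add: hfun_def)

lemma mult_ln_div_lower:
  fixes x y :: real
  assumes "0 < x" "0 \<le> y"
  shows "y - x \<le> y * ln (y / x)"
proof (cases "y = 0")
  case False
  then have "y > 0" using assms by auto
  have "ln (x / y) \<le> x / y - 1"
    using assms \<open>y > 0\<close> by (intro ln_le_minus_one) auto
  moreover have "ln (y / x) = - ln (x / y)"
    using assms \<open>y > 0\<close> by (simp add: ln_div)
  ultimately have "1 - x / y \<le> ln (y / x)" by simp
  then have "y * (1 - x / y) \<le> y * ln (y / x)"
    using \<open>y > 0\<close> by (intro mult_left_mono) auto
  then show ?thesis using \<open>y > 0\<close> by (simp add: algebra_simps)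
qed (use assms in simp)

lemma mult_ln_div_upper:
  fixes x y :: real
  assumes "0 < x" "0 \<le> y"
  shows "y * ln (y / x) \<le> y * (y - x) / x"
proof (cases "y = 0")
  case False
  then have "y > 0" using assms by auto
  then have "ln (y / x) \<le> y / x - 1"
    using assms by (intro ln_le_minus_one) auto
  then have "y * ln (y / x) \<le> y * (y / x - 1)"
    using assms by (intro mult_left_mono) auto
  then show ?thesis using assms by (simp add: field_simps)
qed simp

lemma negxlogx_diff_eq:
  fixes x y :: real
  assumes "0 < x" "0 \<le> y"
  shows "negxlogx x - negxlogx y = (y - x) * ln x + y * ln (y / x)"
  using assms by (cases "y = 0") (auto simp: negxlogx_eq ln_div algebra_simps)

lemma abs_negxlogx_diff_le:
  fixes x y :: real
  assumes "0 < x" "x \<le> 1" "0 \<le> y" "y \<le> 1"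
  shows "\<bar>negxlogx x - negxlogx y\<bar> \<le> hfun (1 / x) * \<bar>x - y\<bar>"
proof -
  have "\<bar>x - y\<bar> \<le> \<bar>x - y\<bar> / x"
    using assms by (simp add: le_divide_eq mult_left_le)
  moreover have "y * (y - x) \<le> \<bar>x - y\<bar>"
  proof (cases "x \<le> y")
    case True
    then have "y * (y - x) \<le> 1 * (y - x)"
      using assms by (intro mult_right_mono) auto
    then show ?thesis by simp
  next
    case False
    then have "y * (y - x) \<le> 0"
      using assms by (simp add: mult_nonneg_nonpos)
    then show ?thesis by linarith
  qed
  then have "y * (y - x) / x \<le> \<bar>x - y\<bar> / x"
    using assms by (simp add: divide_right_mono)
  ultimately have ratio_term: "\<bar>y * ln (y / x)\<bar> \<le> \<bar>x - y\<bar> / x"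
    using mult_ln_div_lower[OF assms(1,3)] mult_ln_div_upper[OF assms(1,3)] by linarith
  have "ln x \<le> 0" using assms by simp
  then have log_term: "\<bar>(y - x) * ln x\<bar> = ln (1 / x) * \<bar>x - y\<bar>"
    using assms by (simp add: ln_div abs_mult abs_minus_commute)
  have "\<bar>negxlogx x - negxlogx y\<bar> \<le> \<bar>(y - x) * ln x\<bar> + \<bar>y * ln (y / x)\<bar>"
    unfolding negxlogx_diff_eq[OF assms(1,3)] by (rule abs_triangle_ineq)
  also have "\<dots> \<le> \<bar>x - y\<bar> / x + ln (1 / x) * \<bar>x - y\<bar>"
    using ratio_term log_term by linarith
  also have "\<dots> = hfun (1 / x) * \<bar>x - y\<bar>"
    by (simp add: hfun_def algebra_simps)
  finally show ?thesis .
qed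

lemma abs_negxlogx_diff_le_via:
  assumes "0 < p" "p \<le> 1" "0 < a" "a \<le> q" "q \<le> 1" "0 \<le> r" "r \<le> 1"
  shows "\<bar>negxlogx p - negxlogx r\<bar> \<le> hfun (1 / p) * \<bar>p - q\<bar> + hfun (1 / a) * \<bar>q - r\<bar>"
proof -
  have "0 < q" using assms by linarith
  have "hfun (1 / q) \<le> hfun (1 / a)"
    using assms \<open>0 < q\<close> by (intro hfun_mono) (auto simp: frac_le)
  then have "hfun (1 / q) * \<bar>q - r\<bar> \<le> hfun (1 / a) * \<bar>q - r\<bar>"
    by (rule mult_right_mono) simp
  moreover have "\<bar>negxlogx q - negxlogx r\<bar> \<le> hfun (1 / q) * \<bar>q - r\<bar>"
    using assms \<open>0 < q\<close> by (intro abs_negxlogx_diff_le) auto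
  moreover have "\<bar>negxlogx p - negxlogx q\<bar> \<le> hfun (1 / p) * \<bar>p - q\<bar>"
    using assms \<open>0 < q\<close> by (intro abs_negxlogx_diff_le) auto
  ultimately show ?thesis by linarith
qed

lemma abs_entropy_diff_le:
  "\<bar>entropy K p - entropy K q\<bar> \<le> (\<Sum>j<K. \<bar>negxlogx (p j) - negxlogx (q j)\<bar>)"
  unfolding entropy_def sum_subtractf[symmetric] by (rule sum_abs)

lemma abs_entropy_diff_le_via:
  assumes "\<And>j. j < K \<Longrightarrow> 0 < p j" "\<And>j. j < K \<Longrightarrow> p j \<le> 1" "0 < a"
    and "\<And>j. j < K \<Longrightarrow> a \<le> q j" "\<And>j. j < K \<Longrightarrow> q j \<le> 1"
    and "\<And>j. j < K \<Longrightarrow> 0 \<le> r j" "\<And>j. j < K \<Longrightarrow> r j \<le> 1"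
  shows "\<bar>entropy K p - entropy K r\<bar>
    \<le> (\<Sum>j<K. \<bar>(p j - q j) / p j\<bar> + ln (1 / p j) * \<bar>p j - q j\<bar>)
       + hfun (1 / a) * (\<Sum>j<K. \<bar>q j - r j\<bar>)"
proof -
  have hfun_mult_abs: "(\<Sum>j<K. hfun (1 / p j) * \<bar>p j - q j\<bar>)
      = (\<Sum>j<K. \<bar>(p j - q j) / p j\<bar> + ln (1 / p j) * \<bar>p j - q j\<bar>)"
    using assms(1) by (intro sum.cong) (auto simp: hfun_def abs_divide algebra_simps less_imp_le)
  have "\<bar>entropy K p - entropy K r\<bar> \<le> (\<Sum>j<K. \<bar>negxlogx (p j) - negxlogx (r j)\<bar>)"
    by (rule abs_entropy_diff_le)
  also have "\<dots> \<le> (\<Sum>j<K. hfun (1 / p j) * \<bar>p j - q j\<bar> + hfun (1 / a) * \<bar>q j - r j\<bar>)"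
    using assms by (intro sum_mono abs_negxlogx_diff_le_via) auto
  also have "\<dots> = (\<Sum>j<K. \<bar>(p j - q j) / p j\<bar> + ln (1 / p j) * \<bar>p j - q j\<bar>)
      + hfun (1 / a) * (\<Sum>j<K. \<bar>q j - r j\<bar>)"
    by (simp only: sum.distrib hfun_mult_abs sum_distrib_left)
  finally show ?thesis .
qed

lemma abs_sum_diff_le_mismatches:
  fixes a b :: "'a \<Rightarrow> real"
  assumes "\<And>i. i \<in> A \<Longrightarrow> a i \<in> {0, 1}" "\<And>i. i \<in> A \<Longrightarrow> b i \<in> {0, 1}"
  shows "\<bar>sum a A - sum b A\<bar> \<le> (\<Sum>i\<in>A. if a i \<noteq> b i then 1 else 0)"
proof -
  have "\<bar>sum a A - sum b A\<bar> \<le> (\<Sum>i\<in>A. \<bar>a i - b i\<bar>)"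
    unfolding sum_subtractf[symmetric] by (rule sum_abs)
  also have "\<dots> = (\<Sum>i\<in>A. if a i \<noteq> b i then 1 else 0)"
    using assms by (intro sum.cong) fastforce+
  finally show ?thesis .
qed

lemma card_filter_lessThan_eq_sum:
  "real (card {i. i < (n::nat) \<and> P i}) = (\<Sum>i<n. if P i then 1 else 0)"
  by (simp add: sum.If_cases Int_def)

lemma frequency_bounds:
  fixes n :: nat
  assumes "\<exists>i<n. P i"
  shows "0 < real (card {i. i < n \<and> P i}) / n" and "real (card {i. i < n \<and> P i}) / n \<le> 1"
proof -
  have "0 < card {i. i < n \<and> P i}"
    using assms by (auto simp: card_gt_0_iff)
  moreover have "card {i. i < n \<and> P i} \<le> n"
    using card_mono[of "{..<n}" "{i. i < n \<and> P i}"] by auto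
  ultimately show "0 < real (card {i. i < n \<and> P i}) / n" "real (card {i. i < n \<and> P i}) / n \<le> 1"
    by auto
qed

lemma mean_zero_one_bounds:
  fixes f :: "nat \<Rightarrow> real"
  assumes "\<And>i. i < n \<Longrightarrow> f i \<in> {0, 1}"
  shows "0 \<le> (1 / real n) * (\<Sum>i<n. f i)" and "(1 / real n) * (\<Sum>i<n. f i) \<le> 1"
proof -
  have "0 \<le> (\<Sum>i<n. f i)"
    using assms by (intro sum_nonneg) fastforce
  moreover have "(\<Sum>i<n. f i) \<le> (\<Sum>i<n. 1)"
    using assms by (intro sum_mono) fastforce
  ultimately show "0 \<le> (1 / real n) * (\<Sum>i<n. f i)" "(1 / real n) * (\<Sum>i<n. f i) \<le> 1"
    by (auto simp: divide_le_eq)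
qed

lemma abs_frequency_diff_le_mismatches:
  fixes f :: "nat \<Rightarrow> real"
  assumes "\<And>i. i < n \<Longrightarrow> f i \<in> {0, 1}"
  shows "\<bar>real (card {i. i < n \<and> P i}) / n - (1 / real n) * (\<Sum>i<n. f i)\<bar>
    \<le> (1 / real n) * (\<Sum>i<n. if f i \<noteq> (if P i then 1 else 0) then 1 else 0)"
proof -
  have "\<bar>(\<Sum>i<n. f i) - real (card {i. i < n \<and> P i})\<bar>
      \<le> (\<Sum>i<n. if f i \<noteq> (if P i then 1 else 0) then 1 else 0)"
    unfolding card_filter_lessThan_eq_sum using assms by (intro abs_sum_diff_le_mismatches) auto
  then have "\<bar>(\<Sum>i<n. f i) - real (card {i. i < n \<and> P i})\<bar> / n
      \<le> (\<Sum>i<n. if f i \<noteq> (if P i then 1 else 0) then 1 else 0) / n"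
    by (rule divide_right_mono) simp
  then show ?thesis
    by (simp add: abs_minus_commute diff_divide_distrib[symmetric])
qed

lemma min_fraction_le:
  fixes f :: "'a \<Rightarrow> nat"
  assumes "finite J" "j \<in> J" "0 < b" "c \<le> b * real (Min (f ` J)) / m" "0 < m"
  shows "c / b \<le> real (f j) / m"
proof -
  have "real (Min (f ` J)) / m \<le> real (f j) / m"
    using assms by (intro divide_right_mono) auto
  moreover have "c / b \<le> real (Min (f ` J)) / m"
    using assms by (simp add: field_simps)
  ultimately show ?thesis by linarith
qed

theorem lemma4:
  fixes K n :: nat
    and p :: "nat \<Rightarrow> real"
    and lab :: "nat \<Rightarrow> nat"
    and g :: "nat \<Rightarrow> nat \<Rightarrow> real"
    and c2 :: real
  assumes p_pos: "\<And>j. j < K \<Longrightarrow> p j > 0"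
    and p_sum: "(\<Sum>j<K. p j) = 1"
    and lab_range: "\<And>i. i < n \<Longrightarrow> lab i < K"
    and clusters_nonempty: "\<And>j. j < K \<Longrightarrow> \<exists>i<n. lab i = j"
    and g_01: "\<And>i j. i < n \<Longrightarrow> j < K \<Longrightarrow> g i j \<in> {0, 1}"
    and g_row: "\<And>i. i < n \<Longrightarrow> \<exists>!j. j < K \<and> g i j = 1"
    and c2_pos: "0 < c2" and c2_lt1: "c2 < 1"
    and nmin_bound:
      "2 * real K * real (Min ((\<lambda>j. card {i. i < n \<and> lab i = j}) ` {..<K})) / real n \<ge> c2"
  shows
    "let nj = (\<lambda>j. card {i. i < n \<and> lab i = j});
         pbar = (\<lambda>j. real (nj j) / real n);
         gTrue = (\<lambda>i j. if lab i = j then (1::real) else 0);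
         phat = (\<lambda>j. (1 / real n) * (\<Sum>i<n. g i j));
         Merr = (\<Sum>j<K. \<Sum>i<n. if g i j \<noteq> gTrue i j then (1::real) else 0)
     in \<bar>entropy K p - entropy K phat\<bar>
        \<le> (\<Sum>j<K. \<bar>(p j - pbar j) / p j\<bar> + ln (1 / p j) * \<bar>p j - pbar j\<bar>)
           + hfun (2 * real K / c2) * \<bar>(1 / real n) * Merr\<bar>"
proof -
  \<comment> \<open>Only the 0/1 entries of \<open>g\<close> enter the argument.\<close>
  define nj where "nj j = card {i. i < n \<and> lab i = j}" for j
  define pbar where "pbar j = real (nj j) / real n" for j
  define phat where "phat j = (1 / real n) * (\<Sum>i<n. g i j)" for j
  define miss where
    "miss j = (\<Sum>i<n. if g i j \<noteq> (if lab i = j then 1 else 0) then 1 else (0::real))" for j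
  have "0 < K" using p_sum by (cases K) auto
  then have "0 < n" using clusters_nonempty[of 0] by auto
  have "p j \<le> 1" if "j < K" for j
    using p_sum member_le_sum[of j "{..<K}" p] p_pos that by fastforce
  moreover have "0 < pbar j" "pbar j \<le> 1" if "j < K" for j
    unfolding pbar_def nj_def using frequency_bounds[OF clusters_nonempty[OF that]] by auto
  moreover have "c2 / (2 * real K) \<le> pbar j" if "j < K" for j
    unfolding pbar_def nj_def using that \<open>0 < K\<close> \<open>0 < n\<close> nmin_bound
    by (intro min_fraction_le) auto
  moreover have "0 \<le> phat j" "phat j \<le> 1" if "j < K" for j
    unfolding phat_def using mean_zero_one_bounds g_01 that by auto
  ultimately have entropy_bound: "\<bar>entropy K p - entropy K phat\<bar>
      \<le> (\<Sum>j<K. \<bar>(p j - pbar j) / p j\<bar> + ln (1 / p j) * \<bar>p j - pbar j\<bar>)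
         + hfun (2 * real K / c2) * (\<Sum>j<K. \<bar>pbar j - phat j\<bar>)"
    using abs_entropy_diff_le_via[of K p "c2 / (2 * real K)" pbar phat] p_pos c2_pos \<open>0 < K\<close>
    by auto
  have "(\<Sum>j<K. \<bar>pbar j - phat j\<bar>) \<le> (\<Sum>j<K. (1 / real n) * miss j)"
    unfolding pbar_def nj_def phat_def miss_def
    using g_01 by (intro sum_mono abs_frequency_diff_le_mismatches) auto
  also have "\<dots> = \<bar>(1 / real n) * (\<Sum>j<K. miss j)\<bar>"
    unfolding miss_def by (simp add: sum_distrib_left sum_nonneg)
  finally have "hfun (2 * real K / c2) * (\<Sum>j<K. \<bar>pbar j - phat j\<bar>)
      \<le> hfun (2 * real K / c2) * \<bar>(1 / real n) * (\<Sum>j<K. miss j)\<bar>"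
    using \<open>0 < K\<close> c2_pos c2_lt1 by (intro mult_left_mono hfun_nonneg) (auto simp: field_simps)
  with entropy_bound show ?thesis
    unfolding Let_def nj_def pbar_def phat_def miss_def by simp
qed

end
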